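(* Let $n\ge3$, $D>0$, $T\ge1$ and $G_1,\dots,G_T>0$. Consider the following $T$-round game on $\mathcal{D}^n_{++}$ with the affine-invariant metric. In round $t$ the player chooses a real diagonal matrix $Y_t$ with $\|Y_t\|_F\le D/2$ (i.e. the point $p_t=e^{Y_t}\in\mathcal{N}_D:=\{e^Y: Y\text{ real diagonal},\ \|Y\|_F\le D/2\}$), then the adversary chooses a real diagonal matrix $X_t$ with $\|X_t\|_F\le G_t$, which defines the loss $f_t(p)=-\mathrm{tr}(X_t\log p)$ on $\mathcal{D}^n_{++}$. Let $$\mathcal{V}_T=\inf_{Y_1}\sup_{X_1}\cdots\inf_{Y_T}\sup_{X_T}\Big[\sum_{t=1}^Tf_t(p_t)-\inf_{p\in\mathcal{N}_D}\sum_{t=1}^Tf_t(p)\Big].$$ Then $\mathcal{V}_T=\frac D2\sqrt{\sum_{t=1}^TG_t^2}$. Moreover, the player strategy $$Y_t=\frac D2\cdot\frac{\sum_{s=1}^{t-1}X_s}{\sqrt{\big\|\sum_{s=1}^{t-1}X_s\big\|_F^2+\sum_{s=t}^TG_s^2}}$$ guarantees regret at most $\frac D2\sqrt{\sum_{t=1}^TG_t^2}$ against every adversary.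
   Context: $\mathcal{D}^n_{++}$ is the set of $n\times n$ diagonal matrices with positive diagonal entries, a submanifold of the SPD matrices with the affine-invariant metric $\langle U,V\rangle_p=\mathrm{tr}(p^{-1}Up^{-1}V)$; its tangent spaces are the real diagonal matrices, $\mathrm{Exp}_I(Y)=e^Y$, and the distance is $d(p,q)=\big(\sum_i(\log\lambda_i(q^{-1/2}pq^{-1/2}))^2\big)^{1/2}$, so $\mathcal{N}_D$ is the geodesic ball of radius $D/2$ about $I$. $\|\cdot\|_F$ is the Frobenius norm, $\log$ the matrix logarithm. Each loss $f_t$ is a nonnegative multiple (at most $G_t$) of a Busemann function and is gsc-convex with gradient norm at most $G_t$. Empty sums equal $0$. *)

theory Defs
  imports "HOL-Analysis.Analysis"
begin

text \<open>A real diagonal n x n matrix is represented by its diagonal, a vector in real^'n.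
  Points of D^n_{++} are diagonal matrices with positive diagonal entries.\<close>

type_synonym 'n diagm = "real ^ 'n"

definition diag_exp :: "'n::finite diagm \<Rightarrow> 'n diagm" where
  "diag_exp Y = (\<chi> i. exp (Y $ i))"

definition diag_log :: "'n::finite diagm \<Rightarrow> 'n diagm" where
  "diag_log p = (\<chi> i. ln (p $ i))"

definition tr_prod :: "'n::finite diagm \<Rightarrow> 'n diagm \<Rightarrow> real" where
  "tr_prod X Y = (\<Sum>i\<in>UNIV. X $ i * Y $ i)"

definition frob :: "'n::finite diagm \<Rightarrow> real" where
  "frob X = sqrt (\<Sum>i\<in>UNIV. (X $ i)^2)"

definition ND :: "real \<Rightarrow> 'n::finite diagm set" where
  "ND D = diag_exp ` {Y. frob Y \<le> D / 2}"

definition loss :: "'n::finite diagm \<Rightarrow> 'n diagm \<Rightarrow> real" where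
  "loss X p = - tr_prod X (diag_log p)"

definition regret :: "real \<Rightarrow> nat \<Rightarrow> (nat \<Rightarrow> 'n::finite diagm) \<Rightarrow> (nat \<Rightarrow> 'n diagm) \<Rightarrow> real" where
  "regret D T Y X =
     (\<Sum>t=1..T. loss (X t) (diag_exp (Y t)))
     - (INF p\<in>ND D. \<Sum>t=1..T. loss (X t) p)"

definition regret_hist :: "real \<Rightarrow> ('n::finite diagm \<times> 'n diagm) list \<Rightarrow> real" where
  "regret_hist D h = regret D (length h) (\<lambda>t. fst (h ! (t - 1))) (\<lambda>t. snd (h ! (t - 1)))"

fun game_val :: "real \<Rightarrow> (nat \<Rightarrow> real) \<Rightarrow> nat \<Rightarrow> ('n::finite diagm \<times> 'n diagm) list \<Rightarrow> ereal" where
  "game_val D G 0 h = ereal (regret_hist D h)"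
| "game_val D G (Suc k) h =
     (INF Y\<in>{Y. frob Y \<le> D / 2}. SUP X\<in>{X. frob X \<le> G (length h + 1)}.
        game_val D G k (h @ [(Y, X)]))"

definition strat :: "real \<Rightarrow> (nat \<Rightarrow> real) \<Rightarrow> nat \<Rightarrow> (nat \<Rightarrow> 'n::finite diagm) \<Rightarrow> nat \<Rightarrow> 'n diagm" where
  "strat D G T X t =
     (D / 2 / sqrt ((frob (\<Sum>s=1..<t. X s))^2 + (\<Sum>s=t..T. (G s)^2))) *\<^sub>R (\<Sum>s=1..<t. X s)"

end

theory Submission imports Defs begin

text \<open>On diagonal matrices the loss of e^Y is the linear function -<X,Y>, and the comparator
  term is -(D/2)|X_1 + ... + X_t|, so the game is an online linear game on a Euclidean ball.
  Its value is governed by the potential r sqrt(|S|^2 + C), where S is the sum of the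
  adversary's moves and C the sum of the squared budgets still to come: the player move
  r S / sqrt(|S|^2 + g^2 + C) keeps the payoff plus potential from increasing whatever the
  adversary does (Cauchy-Schwarz), while in dimension at least 3 the adversary can always
  answer with a vector of full length g orthogonal to both S and the player's move, which
  increases the potential by exactly the amount of the budget used.\<close>

lemma frob_eq_norm: "frob X = norm X"
  by (simp add: frob_def norm_vec_def L2_set_def)

lemma loss_diag_exp: "loss X (diag_exp Y) = - inner X Y"
  by (simp add: loss_def tr_prod_def diag_log_def diag_exp_def inner_vec_def)

lemma Inf_neg_inner_cball:
  fixes S :: "'a::real_inner"
  assumes "r \<ge> 0"
  shows "(INF Y\<in>{Y. norm Y \<le> r}. - inner S Y) = - r * norm S"
  unfolding image_def[symmetric]
proof (rule cInf_eq_minimum)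
  define Y0 where "Y0 = (if S = 0 then 0 else (r / norm S) *\<^sub>R S)"
  have "norm Y0 \<le> r" and "- inner S Y0 = - r * norm S"
    using assms by (auto simp: Y0_def power2_norm_eq_inner[symmetric] power2_eq_square)
  then show "- r * norm S \<in> (\<lambda>Y. - inner S Y) ` {Y. norm Y \<le> r}" by force
next
  fix x assume "x \<in> (\<lambda>Y. - inner S Y) ` {Y. norm Y \<le> r}"
  then obtain Y where "norm Y \<le> r" "x = - inner S Y" by auto
  moreover have "inner S Y \<le> norm S * norm Y" by (rule norm_cauchy_schwarz)
  moreover have "norm S * norm Y \<le> norm S * r" using \<open>norm Y \<le> r\<close> by (simp add: mult_left_mono)
  ultimately show "- r * norm S \<le> x" by (simp add: mult.commute)
qed

lemma regret_eq_inner: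
  assumes "D \<ge> 0"
  shows "regret D T Y X = (\<Sum>t=1..T. - inner (X t) (Y t)) + D/2 * norm (\<Sum>t=1..T. X t)"
proof -
  have "(INF p\<in>ND D. \<Sum>t=1..T. loss (X t) p) = (INF Y\<in>{Y. norm Y \<le> D/2}. - inner (\<Sum>t=1..T. X t) Y)"
    by (simp add: ND_def image_comp comp_def loss_diag_exp frob_eq_norm sum_negf inner_sum_left)
  also have "\<dots> = - (D/2) * norm (\<Sum>t=1..T. X t)"
    using assms by (intro Inf_neg_inner_cball) simp
  finally show ?thesis by (simp add: regret_def loss_diag_exp)
qed

lemma norm_scaleR_normalized_le:
  fixes S :: "'a::real_normed_vector"
  assumes "r \<ge> 0" "C \<ge> 0"
  shows "norm ((r / sqrt (norm S^2 + C)) *\<^sub>R S) \<le> r"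
proof -
  have "norm S \<le> sqrt (norm S^2 + C)"
    using assms(2) real_sqrt_le_mono[of "norm S^2" "norm S^2 + C"] by simp
  moreover have "sqrt (norm S^2 + C) \<ge> 0" using assms(2) by simp
  ultimately have "norm S / sqrt (norm S^2 + C) \<le> 1"
    by (auto simp: divide_le_eq_1)
  then have "r * (norm S / sqrt (norm S^2 + C)) \<le> r" using assms(1) by (rule mult_left_le)
  then show ?thesis using assms by simp
qed

lemma potential_step_upper:
  fixes S X :: "'a::real_inner"
  assumes r: "r \<ge> 0" and X: "norm X \<le> g" and g: "g > 0" and C: "C \<ge> 0"
  shows "- inner X ((r / sqrt (norm S^2 + g^2 + C)) *\<^sub>R S) + r * sqrt (norm (S + X)^2 + C)
         \<le> r * sqrt (norm S^2 + g^2 + C)"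
proof -
  define A where "A = sqrt (norm S^2 + g^2 + C)"
  define b where "b = inner X S"
  have A2: "A^2 = norm S^2 + g^2 + C" using g C by (simp add: A_def add_nonneg_pos add_pos_nonneg)
  then have A: "A > 0" using g C unfolding A_def by (simp add: add_nonneg_pos add_pos_nonneg)
  have "\<bar>b\<bar> \<le> g * norm S"
    using Cauchy_Schwarz_ineq2[of X S] X mult_right_mono[OF X, of "norm S"] by (simp add: b_def)
  moreover have "2 * (g * norm S) \<le> g^2 + norm S^2"
    using zero_le_power2[of "g - norm S"] by (simp add: power2_diff)
  ultimately have "\<bar>b\<bar> \<le> A^2" using A2 C by linarith
  then have "A + b/A \<ge> 0" using A by (simp add: field_simps power2_eq_square)
  have "norm (S + X)^2 = norm S^2 + 2*b + norm X^2"
    by (simp add: power2_norm_eq_inner inner_add b_def inner_commute algebra_simps)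
  moreover have "norm X^2 \<le> g^2" using X by (simp add: power_mono)
  moreover have "(A + b/A)^2 = A^2 + 2*b + (b/A)^2" using A by (simp add: power2_eq_square field_simps)
  ultimately have "norm (S + X)^2 + C \<le> (A + b/A)^2" using A2 zero_le_power2[of "b/A"] by linarith
  with \<open>A + b/A \<ge> 0\<close> have "sqrt (norm (S + X)^2 + C) \<le> A + b/A"
    using real_sqrt_le_mono by fastforce
  then have "r * sqrt (norm (S + X)^2 + C) \<le> r * (A + b/A)"
    using r by (rule mult_left_mono)
  then show ?thesis unfolding A_def[symmetric] by (simp add: b_def algebra_simps)
qed

lemma potential_step_lower:
  fixes S Y :: "'a::euclidean_space"
  assumes "DIM('a) \<ge> 3" and "g \<ge> 0"
  obtains X where "norm X = g" "inner X Y = 0" "norm (S + X)^2 = norm S^2 + g^2"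
proof -
  have "card {S, Y} \<le> 2" by (cases "S = Y") simp_all
  then have "dim {S, Y} \<le> 2" using dim_le_card'[of "{S, Y}"] by simp
  then have "dim {S, Y} < DIM('a)" using assms(1) by simp
  then obtain x where "x \<noteq> 0" and x: "\<And>y. y \<in> span {S, Y} \<Longrightarrow> orthogonal x y"
    using orthogonal_to_subspace_exists by blast
  define X where "X = (g / norm x) *\<^sub>R x"
  have "inner x S = 0" "inner x Y = 0"
    using x[of S] x[of Y] by (auto simp: orthogonal_def span_base)
  then have "inner X S = 0" "inner X Y = 0" by (auto simp: X_def)
  moreover have "norm X = g" using \<open>x \<noteq> 0\<close> assms(2) by (simp add: X_def)
  moreover from calculation have "norm (S + X)^2 = norm S^2 + g^2"
    using norm_add_Pythagorean[of S X] by (simp add: orthogonal_def inner_commute)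
  ultimately show thesis by (intro that) auto
qed

text \<open>The value of a single round is the potential before it; a carries the payoff of earlier
  rounds.\<close>
lemma minimax_round_value:
  fixes S :: "'a::euclidean_space"
  assumes "DIM('a) \<ge> 3" and r: "r \<ge> 0" and g: "g > 0" and C: "C \<ge> 0"
  shows "(INF Y\<in>{Y. norm Y \<le> r}. SUP X\<in>{X. norm X \<le> g}.
            ereal (a - inner X Y + r * sqrt (norm (S + X)^2 + C)))
         = ereal (a + r * sqrt (norm S^2 + g^2 + C))" (is "(INF Y\<in>_. ?sup Y) = ?V")
proof (rule antisym)
  define Y0 where "Y0 = (r / sqrt (norm S^2 + g^2 + C)) *\<^sub>R S"
  have "norm Y0 \<le> r"
    unfolding Y0_def add.assoc using r C by (intro norm_scaleR_normalized_le) simp_all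
  moreover have "?sup Y0 \<le> ?V"
    using potential_step_upper[OF r _ g C, of _ S] by (intro SUP_least) (simp add: Y0_def)
  ultimately show "(INF Y\<in>{Y. norm Y \<le> r}. ?sup Y) \<le> ?V" by (intro INF_lower2) auto
next
  show "?V \<le> (INF Y\<in>{Y. norm Y \<le> r}. ?sup Y)"
  proof (rule INF_greatest)
    fix Y :: 'a
    obtain X where "norm X = g" "inner X Y = 0" "norm (S + X)^2 = norm S^2 + g^2"
      using potential_step_lower[OF assms(1)] g by (metis less_imp_le)
    then show "?V \<le> ?sup Y" by (intro SUP_upper2[of X]) (simp_all add: add.assoc)
  qed
qed

definition hist_payoff :: "('n::finite diagm \<times> 'n diagm) list \<Rightarrow> real" where
  "hist_payoff h = (\<Sum>(Y, X)\<leftarrow>h. - inner X Y)"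

definition hist_sum :: "('n::finite diagm \<times> 'n diagm) list \<Rightarrow> 'n diagm" where
  "hist_sum h = (\<Sum>(Y, X)\<leftarrow>h. X)"

lemma sum_atLeast1_nth_eq_sum_list:
  "(\<Sum>t=1..length xs. f (xs ! (t - 1))) = (\<Sum>x\<leftarrow>xs. f x :: 'b::comm_monoid_add)"
  using sum.atLeast_lessThan_pred_shift[of "\<lambda>i. f (xs ! i)" 0 "length xs"]
  by (simp add: sum_list_sum_nth atLeastLessThanSuc_atLeastAtMost comp_def)

lemma regret_hist_eq:
  assumes "D \<ge> 0"
  shows "regret_hist D h = hist_payoff h + D/2 * norm (hist_sum h)"
  using sum_atLeast1_nth_eq_sum_list[of "\<lambda>p. - inner (snd p) (fst p)" h]
    sum_atLeast1_nth_eq_sum_list[of snd h]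
  by (simp add: regret_hist_def regret_eq_inner[OF assms] hist_payoff_def hist_sum_def case_prod_unfold)

lemma game_val_eq_potential:
  assumes n: "CARD('n::finite) \<ge> 3" and D: "D \<ge> 0"
    and G: "\<And>t. length h < t \<Longrightarrow> t \<le> length h + k \<Longrightarrow> G t > 0"
  shows "game_val D G k (h :: ('n diagm \<times> 'n diagm) list) = ereal (hist_payoff h
           + D/2 * sqrt (norm (hist_sum h)^2 + (\<Sum>s\<in>{length h<..length h + k}. (G s)^2)))"
  using G
proof (induction k arbitrary: h)
  case 0
  then show ?case by (simp add: regret_hist_eq[OF D])
next
  case (Suc k)
  define C where "C = (\<Sum>s\<in>{Suc (length h)<..Suc (length h) + k}. (G s)^2)"
  have "{length h<..length h + Suc k} = insert (Suc (length h)) {Suc (length h)<..Suc (length h) + k}"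
    by auto
  then have budget: "(\<Sum>s\<in>{length h<..length h + Suc k}. (G s)^2) = G (Suc (length h))^2 + C"
    by (simp add: C_def)
  have "game_val D G k (h @ [(Y, X)]) = ereal (hist_payoff h - inner X Y
          + D/2 * sqrt (norm (hist_sum h + X)^2 + C))" for Y X
    using Suc.prems by (subst Suc.IH) (auto simp: hist_payoff_def hist_sum_def C_def)
  then have "game_val D G (Suc k) h = (INF Y\<in>{Y. norm Y \<le> D/2}. SUP X\<in>{X. norm X \<le> G (Suc (length h))}.
          ereal (hist_payoff h - inner X Y + D/2 * sqrt (norm (hist_sum h + X)^2 + C)))"
    by (simp add: frob_eq_norm)
  also have "\<dots> = ereal (hist_payoff h + D/2 * sqrt (norm (hist_sum h)^2 + G (Suc (length h))^2 + C))"
    using n D Suc.prems by (intro minimax_round_value) (auto simp: C_def sum_nonneg)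
  finally show ?case unfolding budget by (simp add: add.assoc)
qed

lemma frob_strat_le:
  assumes "D \<ge> 0" "t \<le> T"
  shows "frob (strat D G T X t) \<le> D / 2"
  using norm_scaleR_normalized_le[of "D/2" "\<Sum>s=t..T. (G s)^2" "\<Sum>s=1..<t. X s"] assms
  by (simp add: strat_def frob_eq_norm sum_nonneg)

text \<open>Along a play of the strategy, payoff plus potential never increases.\<close>
lemma regret_strat_le:
  fixes X :: "nat \<Rightarrow> 'n::finite diagm"
  assumes D: "D \<ge> 0" and G: "\<And>t. t \<in> {1..T} \<Longrightarrow> G t > 0"
    and X: "\<And>t. t \<in> {1..T} \<Longrightarrow> frob (X t) \<le> G t"
  shows "regret D T (strat D G T X) X \<le> D / 2 * sqrt (\<Sum>t=1..T. (G t)^2)"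
proof -
  define Y where "Y = strat D G T X"
  define \<Phi> where "\<Phi> t = (\<Sum>s=1..t. - inner (X s) (Y s))
      + D/2 * sqrt (norm (\<Sum>s=1..t. X s)^2 + (\<Sum>s=Suc t..T. (G s)^2))" for t
  have step: "\<Phi> (Suc t) \<le> \<Phi> t" if "Suc t \<le> T" for t
  proof -
    define S where "S = (\<Sum>s=1..t. X s)"
    define C where "C = (\<Sum>s=Suc (Suc t)..T. (G s)^2)"
    have budget: "(\<Sum>s=Suc t..T. (G s)^2) = G (Suc t)^2 + C"
      unfolding C_def using that by (simp add: sum.atLeast_Suc_atMost)
    have "Y (Suc t) = (D/2 / sqrt (norm S^2 + G (Suc t)^2 + C)) *\<^sub>R S"
      by (simp add: Y_def strat_def frob_eq_norm S_def budget atLeastLessThanSuc_atLeastAtMost add.assoc)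
    moreover have "- inner (X (Suc t)) ((D/2 / sqrt (norm S^2 + G (Suc t)^2 + C)) *\<^sub>R S)
        + D/2 * sqrt (norm (S + X (Suc t))^2 + C) \<le> D/2 * sqrt (norm S^2 + G (Suc t)^2 + C)"
      using D that G X by (intro potential_step_upper) (auto simp: frob_eq_norm C_def sum_nonneg)
    ultimately show ?thesis by (simp add: \<Phi>_def S_def C_def budget add.assoc)
  qed
  have "\<Phi> t \<le> \<Phi> 0" if "t \<le> T" for t
    using that by (induction t) (auto dest: step)
  then have "\<Phi> T \<le> \<Phi> 0" by simp
  moreover have "regret D T Y X = \<Phi> T"
    by (simp add: regret_eq_inner[OF D] \<Phi>_def)
  ultimately show ?thesis by (simp add: Y_def \<Phi>_def)
qed

theorem mainTheorem4:
  fixes D :: real and T :: nat and G :: "nat \<Rightarrow> real"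
  assumes n3: "CARD('n::finite) \<ge> 3"
    and D: "D > 0" and T: "T \<ge> 1"
    and G: "\<And>t. t \<in> {1..T} \<Longrightarrow> G t > 0"
  shows "(game_val D G T ([] :: ('n diagm \<times> 'n diagm) list)
            = ereal (D / 2 * sqrt (\<Sum>t=1..T. (G t)^2)))
       \<and> (\<forall>X :: nat \<Rightarrow> 'n diagm. (\<forall>t\<in>{1..T}. frob (X t) \<le> G t) \<longrightarrow>
            (\<forall>t\<in>{1..T}. frob (strat D G T X t) \<le> D / 2)
            \<and> regret D T (strat D G T X) X \<le> D / 2 * sqrt (\<Sum>t=1..T. (G t)^2))"
proof (intro conjI allI impI ballI)
  have "{0<..T} = {1..T}" by auto
  then show "game_val D G T ([] :: ('n diagm \<times> 'n diagm) list) = ereal (D / 2 * sqrt (\<Sum>t=1..T. (G t)^2))"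
    using game_val_eq_potential[OF n3, of D "[]" T G] D G
    by (simp add: hist_payoff_def hist_sum_def)
next
  fix X :: "nat \<Rightarrow> 'n diagm" and t
  assume "\<forall>t\<in>{1..T}. frob (X t) \<le> G t"
  then show "regret D T (strat D G T X) X \<le> D / 2 * sqrt (\<Sum>t=1..T. (G t)^2)"
    using D G by (intro regret_strat_le) auto
  assume "t \<in> {1..T}"
  then show "frob (strat D G T X t) \<le> D / 2"
    using D by (intro frob_strat_le) auto
qed

end
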